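(* Let $H=(V,E)$ be a (possibly infinite) hypergraph and let $(V_1,E_1)$ and $(V_2,E_2)$ be subhypergraphs of $H$ (so each hyperedge in $E_i$ is a subset of $V_i$) with $V_1\cup V_2=V$, $V_1\cap V_2=\{v\}$ for a single vertex $v$, and $E=E_1\cup E_2$. In the maker–breaker game in which maker moves first, maker can win on $(V,E)$ if and only if at least one of the following holds: (1) maker can win the maker–breaker game on $(V_1,E_1)$; (2) maker can win the maker–breaker game on $(V_2,E_2)$; (3) for both $i=1$ and $i=2$, maker can win the game on $(V_i,E_i)$ started from the position in which $v$ is already colored with maker's color and maker makes the next move.
   Context: The maker–breaker game on a hypergraph $(V,E)$: two players, maker and breaker, alternately color one previously uncolored vertex with their own color (here maker moves first unless a different starting position is specified). Maker wins if at some finite stage all vertices of some hyperedge are maker-colored; breaker wins otherwise. "Maker can win" means maker has a strategy guaranteeing a win regardless of breaker's play. *)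

theory Defs
  imports Main
begin

(* A position is given by an initial set M0 of maker-coloured vertices,
   an initial set B0 of breaker-coloured vertices, and the history h of
   moves made since then (a list of vertices); maker moves first from the
   initial position, so entries of h at even indices are maker's moves and
   entries at odd indices are breaker's moves. *)

definition free_vertices :: "'a set \<Rightarrow> 'a set \<Rightarrow> 'a set \<Rightarrow> 'a list \<Rightarrow> 'a set" where
  "free_vertices V M0 B0 h = V - M0 - B0 - set h"

definition maker_vertices :: "'a set \<Rightarrow> 'a list \<Rightarrow> 'a set" where
  "maker_vertices M0 h = M0 \<union> {h ! i | i. i < length h \<and> even i}"

definition maker_won :: "'a set set \<Rightarrow> 'a set \<Rightarrow> 'a list \<Rightarrow> bool" where
  "maker_won E M0 h \<longleftrightarrow> (\<exists>e\<in>E. e \<subseteq> maker_vertices M0 h)"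

definition legal_strategy :: "'a set \<Rightarrow> 'a set \<Rightarrow> 'a set \<Rightarrow> ('a list \<Rightarrow> 'a) \<Rightarrow> bool" where
  "legal_strategy V M0 B0 s \<longleftrightarrow>
     (\<forall>h. free_vertices V M0 B0 h \<noteq> {} \<longrightarrow> s h \<in> free_vertices V M0 B0 h)"

primrec play :: "'a set \<Rightarrow> 'a set set \<Rightarrow> 'a set \<Rightarrow> 'a set \<Rightarrow>
    ('a list \<Rightarrow> 'a) \<Rightarrow> ('a list \<Rightarrow> 'a) \<Rightarrow> nat \<Rightarrow> 'a list" where
  "play V E M0 B0 \<sigma> \<tau> 0 = []"
| "play V E M0 B0 \<sigma> \<tau> (Suc n) =
     (let h = play V E M0 B0 \<sigma> \<tau> n in
      if maker_won E M0 h \<or> free_vertices V M0 B0 h = {} then h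
      else h @ [if even (length h) then \<sigma> h else \<tau> h])"

definition maker_can_win_from :: "'a set \<Rightarrow> 'a set set \<Rightarrow> 'a set \<Rightarrow> 'a set \<Rightarrow> bool" where
  "maker_can_win_from V E M0 B0 \<longleftrightarrow>
     (\<exists>\<sigma>. legal_strategy V M0 B0 \<sigma> \<and>
        (\<forall>\<tau>. legal_strategy V M0 B0 \<tau> \<longrightarrow>
           (\<exists>n. maker_won E M0 (play V E M0 B0 \<sigma> \<tau> n))))"

definition maker_can_win :: "'a set \<Rightarrow> 'a set set \<Rightarrow> bool" where
  "maker_can_win V E \<longleftrightarrow> maker_can_win_from V E {} {}"

end

theory Submission
  imports Defs
begin

(*
  Maker's winning positions form the least fixed point of one round of the game: forced_win E M F
  says that maker, owning M and to move with free vertices F, can force a win in finitely many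
  rounds. Maker realises a derivation move by move, and from any other position breaker can always
  answer so that the position stays outside the fixed point.

  On H glued from H1 and H2 at v, breaker may answer every move in the component where it was made.
  Hence a win on H gives a win on H2 or a win on H1 with v already owned by maker, and symmetrically;
  since a win without v is also a win with v, one of (1), (2), (3) follows. Conversely a win on a
  component lifts to H by monotonicity, and if maker wins both components once v is hers, she takes v
  and then plays in the component breaker did not answer in.
*)

section \<open>Forced wins\<close>

definition contains_edge :: "'a set set \<Rightarrow> 'a set \<Rightarrow> bool" where
  "contains_edge E M \<longleftrightarrow> (\<exists>e\<in>E. e \<subseteq> M)"

lemma contains_edge_mono: "contains_edge E M \<Longrightarrow> E \<subseteq> E' \<Longrightarrow> M \<subseteq> M' \<Longrightarrow> contains_edge E' M'"
  unfolding contains_edge_def by blast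

lemma contains_edge_Un_split:
  assumes "\<forall>e\<in>E1. e \<subseteq> V1" and "\<forall>e\<in>E2. e \<subseteq> V2" and "contains_edge (E1 \<union> E2) M"
  shows "contains_edge E1 (M \<inter> V1) \<or> contains_edge E2 (M \<inter> V2)"
proof -
  obtain e where "e \<in> E1 \<union> E2" and "e \<subseteq> M" using assms(3) unfolding contains_edge_def by blast
  with assms(1,2) show ?thesis unfolding contains_edge_def by (metis Int_subset_iff UnE)
qed

(* As the predicate is inductive, derivations are
   well-founded, which makes maker's win finite even when F is infinite. *)
inductive forced_win :: "'a set set \<Rightarrow> 'a set \<Rightarrow> 'a set \<Rightarrow> bool" for E where
  won: "contains_edge E M \<Longrightarrow> forced_win E M F"
| move: "x \<in> F \<Longrightarrow> (F - {x} = {} \<Longrightarrow> contains_edge E (insert x M)) \<Longrightarrow>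
    (\<And>y. y \<in> F - {x} \<Longrightarrow> forced_win E (insert x M) (F - {x, y})) \<Longrightarrow> forced_win E M F"

lemma forced_win_winning_move: "x \<in> F \<Longrightarrow> contains_edge E (insert x M) \<Longrightarrow> forced_win E M F"
  by (rule forced_win.move[of x]) (auto intro: forced_win.won)

lemma forced_win_contains_edge: "forced_win E M F \<Longrightarrow> contains_edge E (M \<union> F)"
proof (induction rule: forced_win.induct)
  case (won M F)
  then show ?case by (rule contains_edge_mono) auto
next
  case (move x F M)
  show ?case
  proof (cases "F - {x} = {}")
    case True
    from move.hyps(2)[OF True] show ?thesis by (rule contains_edge_mono) (use move.hyps(1) in auto)
  next
    case False
    then obtain y where "y \<in> F - {x}" by blast
    from move.IH[OF this] show ?thesis by (rule contains_edge_mono) (use move.hyps(1) in auto)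
  qed
qed

lemma forced_win_mono:
  assumes "forced_win E M F" and "E \<subseteq> E'" and "M \<subseteq> M'" and "F \<subseteq> M' \<union> F'"
  shows "forced_win E' M' F'"
  using assms
proof (induction arbitrary: M' F' rule: forced_win.induct)
  case (won M F)
  then show ?case by (blast intro: forced_win.won contains_edge_mono)
next
  case (move x F M)
  have "forced_win E M F" using move.hyps by (rule forced_win.move)
  from forced_win_contains_edge[OF this] have edge: "contains_edge E' (M' \<union> F')"
    by (rule contains_edge_mono) (use move.prems in auto)
  have after_reply: "forced_win E' (insert z M') (F' - {z, y'})"
    if z: "x \<in> insert z M'" for z y'
  proof (cases "F - {x} = {}")
    case True
    from move.hyps(2)[OF True] have "contains_edge E' (insert z M')"
      by (rule contains_edge_mono) (use move.prems z in auto)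
    then show ?thesis by (rule forced_win.won)
  next
    case False
    then obtain y where y: "y \<in> F - {x}" "y' \<in> F - {x} \<Longrightarrow> y = y'"
      by (cases "y' \<in> F - {x}") auto
    then have sub: "F - {x, y} \<subseteq> insert z M' \<union> (F' - {z, y'})"
      using move.prems(3) by blast
    show ?thesis by (rule move.IH[OF y(1) move.prems(1) _ sub]) (use move.prems(2) z in auto)
  qed
  show ?case
  proof (cases "F' = {}")
    case True
    with edge show ?thesis by (auto intro: forced_win.won)
  next
    case False
    then obtain z where z: "z \<in> F'" "x \<in> insert z M'"
      using move.hyps(1) move.prems by (cases "x \<in> F'") auto
    show ?thesis
    proof (rule forced_win.move[OF z(1)])
      show "contains_edge E' (insert z M')" if "F' - {z} = {}"
        using edge by (rule contains_edge_mono) (use that in auto)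
      show "forced_win E' (insert z M') (F' - {z, y'})" for y'
        using after_reply[OF z(2)] .
    qed
  qed
qed

section \<open>Gluing two hypergraphs at a vertex\<close>

lemma forced_win_glue:
  assumes "forced_win E1 (insert v M) F1" and "forced_win E2 (insert v M) F2"
    and "F1 \<inter> F2 = {}"
  shows "forced_win (E1 \<union> E2) M (insert v (F1 \<union> F2))"
proof (rule forced_win.move[of v])
  show "contains_edge (E1 \<union> E2) (insert v M)" if "insert v (F1 \<union> F2) - {v} = {}"
    using forced_win_contains_edge[OF assms(1)] by (rule contains_edge_mono) (use that in auto)
  show "forced_win (E1 \<union> E2) (insert v M) (insert v (F1 \<union> F2) - {v, y})" for y
  proof (cases "y \<in> F1")
    case True
    with assms(3) have "y \<notin> F2" by blast
    then show ?thesis by (intro forced_win_mono[OF assms(2)]) auto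
  next
    case False
    then show ?thesis by (intro forced_win_mono[OF assms(1)]) auto
  qed
qed simp

(* m and f project positions of the whole board onto a component in which maker has just played x,
   and Q says that maker wins the other component. The position G after some answer of breaker is
   needed only when the component has no vertex left for breaker. *)
lemma forced_win_on_component:
  fixes m f :: "'a set \<Rightarrow> 'a set"
  assumes x: "x \<in> f F"
    and m: "m (insert x M) = insert x (m M)"
    and f: "\<And>H. f (F - H) = f F - H"
    and pass: "G \<subseteq> F - {x}" "forced_win E (m (insert x M)) (f G) \<or> Q"
    and reply: "\<And>y. y \<in> f F - {x} \<Longrightarrow> forced_win E (m (insert x M)) (f (F - {x, y})) \<or> Q"
  shows "forced_win E (m M) (f F) \<or> Q"
proof (rule disjCI)
  assume "\<not> Q"
  show "forced_win E (m M) (f F)"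
  proof (rule forced_win.move[OF x])
    have "G = F - insert x (F - G)" using pass(1) by blast
    then have "f G = f F - insert x (F - G)" using f by metis
    then have "f G \<subseteq> f F - {x}" by blast
    moreover from pass(2) \<open>\<not> Q\<close> have "contains_edge E (insert x (m M) \<union> f G)"
      using forced_win_contains_edge m by metis
    ultimately show "contains_edge E (insert x (m M))" if "f F - {x} = {}"
      using that by (metis Un_empty_right subset_empty)
    show "forced_win E (insert x (m M)) (f F - {x, y})" if "y \<in> f F - {x}" for y
      using reply[OF that] \<open>\<not> Q\<close> m f by metis
  qed
qed

(* Breaker answers every move in the component where it was made. The vertices shared with V2
   count as maker's in the first component. *)
lemma forced_win_split:
  assumes E1: "\<forall>e\<in>E1. e \<subseteq> V1" and E2: "\<forall>e\<in>E2. e \<subseteq> V2"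
    and "forced_win (E1 \<union> E2) M F" and "F \<subseteq> V1 \<union> V2"
  shows "forced_win E1 ((M \<union> V2) \<inter> V1) (F - V2) \<or> forced_win E2 (M \<inter> V2) (F \<inter> V2)"
proof -
  define P1 where "P1 M F \<longleftrightarrow> forced_win E1 ((M \<union> V2) \<inter> V1) (F - V2)" for M F
  define P2 where "P2 M F \<longleftrightarrow> forced_win E2 (M \<inter> V2) (F \<inter> V2)" for M F
  have won_split: "P1 M F \<or> P2 M F" if "contains_edge (E1 \<union> E2) M" for M F
  proof -
    have "M \<inter> V1 \<subseteq> (M \<union> V2) \<inter> V1" by blast
    with contains_edge_Un_split[OF E1 E2 that] show ?thesis
      unfolding P1_def P2_def by (metis contains_edge_mono forced_win.won order_refl)
  qed
  have "P1 M F \<or> P2 M F" using assms(3,4)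
  proof (induction rule: forced_win.induct)
    case (won M F)
    show ?case by (rule won_split[OF won.hyps])
  next
    case (move x F M)
    obtain G where G: "G \<subseteq> F - {x}" "P1 (insert x M) G \<or> P2 (insert x M) G"
    proof (cases "F - {x} = {}")
      case True
      then show ?thesis using that won_split[OF move.hyps(2)[OF True]] by blast
    next
      case False
      then obtain y where "y \<in> F - {x}" by blast
      then show ?thesis using that move.IH[of y] move.prems by blast
    qed
    have IH: "P1 (insert x M) (F - {x, y}) \<or> P2 (insert x M) (F - {x, y})" if "y \<in> F - {x}" for y
      using move.IH[OF that] move.prems by blast
    show ?case
    proof (cases "x \<in> V2")
      case True
      have P1_stays: "P1 M F" if "P1 (insert x M) G'" "G' \<subseteq> F" for G'
        using that(1) unfolding P1_def by (rule forced_win_mono) (use True that(2) in auto)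
      have "forced_win E2 (M \<inter> V2) (F \<inter> V2) \<or> P1 M F"
      proof (rule forced_win_on_component[where m = "\<lambda>M. M \<inter> V2" and f = "\<lambda>F. F \<inter> V2", OF _ _ _ G(1)])
        show "x \<in> F \<inter> V2" "insert x M \<inter> V2 = insert x (M \<inter> V2)" "(F - H) \<inter> V2 = F \<inter> V2 - H" for H
          using move.hyps(1) True by blast+
        show "forced_win E2 (insert x M \<inter> V2) (G \<inter> V2) \<or> P1 M F"
          using G P1_stays unfolding P2_def by blast
        show "forced_win E2 (insert x M \<inter> V2) ((F - {x, y}) \<inter> V2) \<or> P1 M F"
          if "y \<in> F \<inter> V2 - {x}" for y
          using IH[of y] that P1_stays unfolding P2_def by blast
      qed
      then show ?thesis unfolding P2_def by blast
    next
      case False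
      have P2_stays: "P2 M F" if "P2 (insert x M) G'" "G' \<subseteq> F" for G'
        using that(1) unfolding P2_def by (rule forced_win_mono) (use False that(2) in auto)
      have "forced_win E1 ((M \<union> V2) \<inter> V1) (F - V2) \<or> P2 M F"
      proof (rule forced_win_on_component[where m = "\<lambda>M. (M \<union> V2) \<inter> V1" and f = "\<lambda>F. F - V2",
            OF _ _ _ G(1)])
        show "x \<in> F - V2" "(insert x M \<union> V2) \<inter> V1 = insert x ((M \<union> V2) \<inter> V1)"
            "F - H - V2 = F - V2 - H" for H
          using move.hyps(1) move.prems False by blast+
        show "forced_win E1 ((insert x M \<union> V2) \<inter> V1) (G - V2) \<or> P2 M F"
          using G P2_stays unfolding P1_def by blast
        show "forced_win E1 ((insert x M \<union> V2) \<inter> V1) (F - {x, y} - V2) \<or> P2 M F"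
          if "y \<in> F - V2 - {x}" for y
          using IH[of y] that P2_stays unfolding P1_def by blast
      qed
      then show ?thesis unfolding P1_def by blast
    qed
  qed
  then show ?thesis unfolding P1_def P2_def .
qed

lemma forced_win_glued_iff:
  assumes E1: "\<forall>e\<in>E1. e \<subseteq> V1" and E2: "\<forall>e\<in>E2. e \<subseteq> V2" and v: "V1 \<inter> V2 = {v}"
  shows "forced_win (E1 \<union> E2) {} (V1 \<union> V2) \<longleftrightarrow>
    forced_win E1 {} V1 \<or> forced_win E2 {} V2 \<or>
    (forced_win E1 {v} (V1 - {v}) \<and> forced_win E2 {v} (V2 - {v}))"
proof -
  have given_v: "forced_win E' {} W \<Longrightarrow> forced_win E' {v} (W - {v})" for E' :: "'a set set" and W
    by (erule forced_win_mono) auto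
  have "forced_win E1 {v} (V1 - {v}) \<or> forced_win E2 {} V2" if "forced_win (E1 \<union> E2) {} (V1 \<union> V2)"
  proof -
    have "V1 \<union> V2 - V2 = V1 - {v}" "V2 \<inter> V1 = {v}" "(V1 \<union> V2) \<inter> V2 = V2" using v by blast+
    with forced_win_split[OF E1 E2 that] show ?thesis by simp
  qed
  moreover have "forced_win E2 {v} (V2 - {v}) \<or> forced_win E1 {} V1"
    if "forced_win (E1 \<union> E2) {} (V1 \<union> V2)"
  proof -
    have "V2 \<union> V1 - V1 = V2 - {v}" "V1 \<inter> V2 = {v}" "(V2 \<union> V1) \<inter> V1 = V1" using v by blast+
    with forced_win_split[OF E2 E1, of "{}" "V2 \<union> V1"] that show ?thesis
      by (simp add: Un_commute)
  qed
  moreover have "forced_win (E1 \<union> E2) {} (V1 \<union> V2)"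
    if "forced_win E1 {v} (V1 - {v})" "forced_win E2 {v} (V2 - {v})"
  proof -
    have "(V1 - {v}) \<inter> (V2 - {v}) = {}" "insert v (V1 - {v} \<union> (V2 - {v})) = V1 \<union> V2"
      using v by blast+
    with forced_win_glue[OF that] show ?thesis by simp
  qed
  moreover have "forced_win (E1 \<union> E2) {} (V1 \<union> V2)" if "forced_win E1 {} V1 \<or> forced_win E2 {} V2"
    using that by (auto elim: forced_win_mono)
  ultimately show ?thesis using given_v by blast
qed

section \<open>Plays\<close>

lemma maker_vertices_image: "maker_vertices M0 h = M0 \<union> (!) h ` {i. i < length h \<and> even i}"
  unfolding maker_vertices_def by (simp add: setcompr_eq_image)

lemma maker_vertices_snoc:
  "maker_vertices M0 (h @ [a]) =
    (if even (length h) then insert a (maker_vertices M0 h) else maker_vertices M0 h)"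
proof -
  have "{i. i < Suc (length h) \<and> even i} =
      {i. i < length h \<and> even i} \<union> {i. i = length h \<and> even i}"
    by auto
  moreover have "(!) (h @ [a]) ` {i. i < length h \<and> even i} = (!) h ` {i. i < length h \<and> even i}"
    by (rule image_cong) (simp_all add: nth_append)
  moreover have "(!) (h @ [a]) ` {i. i = length h \<and> even i} = (if even (length h) then {a} else {})"
    by auto
  ultimately show ?thesis unfolding maker_vertices_image by (simp add: image_Un)
qed

lemma maker_vertices_Cons_Cons: "maker_vertices M0 (x # y # h) = maker_vertices (insert x M0) h"
proof -
  have "i = 0 \<or> (\<exists>j. i = Suc (Suc j) \<and> j < length h \<and> even j)"
    if "i < Suc (Suc (length h))" "even i" for i
    using that by (cases i; cases "i - 1") auto
  then have "{i. i < length (x # y # h) \<and> even i} =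
      insert 0 ((\<lambda>i. Suc (Suc i)) ` {i. i < length h \<and> even i})"
    by auto
  then show ?thesis unfolding maker_vertices_image by (auto simp: image_image)
qed

lemma free_vertices_snoc: "free_vertices V M0 B0 (h @ [a]) = free_vertices V M0 B0 h - {a}"
  by (auto simp: free_vertices_def)

lemma free_vertices_Cons_Cons:
  "free_vertices V M0 B0 (x # y # h) = free_vertices V (insert x M0) (insert y B0) h"
  by (auto simp: free_vertices_def)

lemma maker_won_iff: "maker_won E M0 h \<longleftrightarrow> contains_edge E (maker_vertices M0 h)"
  by (simp add: maker_won_def contains_edge_def)

lemma play_Cons_Cons:
  assumes "play V E M0 B0 \<sigma> \<tau> 2 = [x, y]"
  shows "play V E M0 B0 \<sigma> \<tau> (Suc (Suc k)) =
    x # y # play V E (insert x M0) (insert y B0) (\<lambda>h. \<sigma> (x # y # h)) (\<lambda>h. \<tau> (x # y # h)) k"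
proof (induction k)
  case 0
  from assms show ?case by (simp add: numeral_2_eq_2)
next
  case (Suc k)
  then show ?case
    by (simp add: Let_def maker_won_iff maker_vertices_Cons_Cons free_vertices_Cons_Cons)
qed

section \<open>Strategies for maker\<close>

lemma legal_strategy_exists: "\<exists>s. legal_strategy V M0 B0 s"
proof
  show "legal_strategy V M0 B0 (\<lambda>h. SOME z. z \<in> free_vertices V M0 B0 h)"
    unfolding legal_strategy_def by (simp add: some_in_eq)
qed

definition winning_strategy :: "'a set \<Rightarrow> 'a set set \<Rightarrow> 'a set \<Rightarrow> 'a set \<Rightarrow> ('a list \<Rightarrow> 'a) \<Rightarrow> bool" where
  "winning_strategy V E M0 B0 \<sigma> \<longleftrightarrow> legal_strategy V M0 B0 \<sigma> \<and>
     (\<forall>\<tau>. legal_strategy V M0 B0 \<tau> \<longrightarrow> (\<exists>n. maker_won E M0 (play V E M0 B0 \<sigma> \<tau> n)))"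

lemma maker_can_win_from_iff_winning_strategy:
  "maker_can_win_from V E M0 B0 \<longleftrightarrow> (\<exists>\<sigma>. winning_strategy V E M0 B0 \<sigma>)"
  unfolding maker_can_win_from_def winning_strategy_def ..

lemma maker_can_win_from_contains_edge:
  assumes "contains_edge E M0"
  shows "maker_can_win_from V E M0 B0"
proof -
  obtain \<sigma> where "legal_strategy V M0 B0 \<sigma>" using legal_strategy_exists by blast
  moreover have "maker_won E M0 (play V E M0 B0 \<sigma> \<tau> 0)" for \<tau>
    using assms by (simp add: maker_won_iff maker_vertices_def)
  ultimately show ?thesis unfolding maker_can_win_from_def by blast
qed

(* Maker opens with x and, after breaker's answer y, follows S y; d only serves histories that do
   not arise in such a play. *)
definition open_with :: "'a \<Rightarrow> ('a \<Rightarrow> 'a list \<Rightarrow> 'a) \<Rightarrow> ('a list \<Rightarrow> 'a) \<Rightarrow> 'a list \<Rightarrow> 'a" where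
  "open_with x S d h =
    (case h of [] \<Rightarrow> x | [_] \<Rightarrow> d h | x' # y # h' \<Rightarrow> if x' = x then S y h' else d h)"

lemma legal_strategy_open_with:
  assumes "x \<in> V - M0 - B0" and d: "legal_strategy V M0 B0 d"
    and S: "\<And>y. legal_strategy V (insert x M0) (insert y B0) (S y)"
  shows "legal_strategy V M0 B0 (open_with x S d)"
  unfolding legal_strategy_def
proof (intro allI impI)
  fix h
  assume free: "free_vertices V M0 B0 h \<noteq> {}"
  then have d_free: "d h \<in> free_vertices V M0 B0 h" using d unfolding legal_strategy_def by blast
  show "open_with x S d h \<in> free_vertices V M0 B0 h"
  proof (cases h rule: remdups_adj.cases)
    case 1
    with assms(1) show ?thesis by (simp add: open_with_def free_vertices_def)
  next
    case (2 a)
    with d_free show ?thesis by (simp add: open_with_def)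
  next
    case (3 a b h')
    show ?thesis
    proof (cases "a = x")
      case True
      with free 3 have "free_vertices V (insert x M0) (insert b B0) h' \<noteq> {}"
        by (simp add: free_vertices_Cons_Cons)
      with S[of b] have "S b h' \<in> free_vertices V (insert x M0) (insert b B0) h'"
        unfolding legal_strategy_def by blast
      with True 3 show ?thesis by (simp add: open_with_def free_vertices_Cons_Cons)
    next
      case False
      with d_free 3 show ?thesis by (simp add: open_with_def)
    qed
  qed
qed

lemma winning_strategy_open_with:
  assumes x: "x \<in> V - M0 - B0" and d: "legal_strategy V M0 B0 d"
    and last: "V - M0 - B0 - {x} = {} \<Longrightarrow> contains_edge E (insert x M0)"
    and S_legal: "\<And>y. legal_strategy V (insert x M0) (insert y B0) (S y)"
    and S_wins: "\<And>y. y \<in> V - M0 - B0 - {x} \<Longrightarrow> winning_strategy V E (insert x M0) (insert y B0) (S y)"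
  shows "winning_strategy V E M0 B0 (open_with x S d)"
  unfolding winning_strategy_def
proof (intro conjI allI impI)
  show "legal_strategy V M0 B0 (open_with x S d)" using x d S_legal by (rule legal_strategy_open_with)
  fix \<tau>
  assume \<tau>: "legal_strategy V M0 B0 \<tau>"
  show "\<exists>n. maker_won E M0 (play V E M0 B0 (open_with x S d) \<tau> n)"
  proof (cases "maker_won E M0 [] \<or> maker_won E M0 [x]")
    case True
    with x have "maker_won E M0 (play V E M0 B0 (open_with x S d) \<tau> 1)"
      by (auto simp: open_with_def free_vertices_def)
    then show ?thesis ..
  next
    case False
    define y where "y = \<tau> [x]"
    have free: "V - M0 - B0 - {x} \<noteq> {}"
      using False last by (auto simp: maker_won_iff maker_vertices_def)
    moreover have "free_vertices V M0 B0 [x] = V - M0 - B0 - {x}" by (simp add: free_vertices_def)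
    ultimately have y: "y \<in> V - M0 - B0 - {x}"
      using \<tau> unfolding y_def legal_strategy_def by metis
    have "play V E M0 B0 (open_with x S d) \<tau> 2 = [x, y]"
      using False x free by (simp add: numeral_2_eq_2 open_with_def free_vertices_def y_def) blast
    note play = play_Cons_Cons[OF this]
    have "legal_strategy V (insert x M0) (insert y B0) (\<lambda>h. \<tau> (x # y # h))"
      using \<tau> unfolding legal_strategy_def by (metis free_vertices_Cons_Cons)
    then obtain n where "maker_won E (insert x M0)
        (play V E (insert x M0) (insert y B0) (S y) (\<lambda>h. \<tau> (x # y # h)) n)"
      using S_wins[OF y] unfolding winning_strategy_def by blast
    moreover have "(\<lambda>h. open_with x S d (x # y # h)) = S y" by (simp add: open_with_def)
    ultimately have "maker_won E M0 (play V E M0 B0 (open_with x S d) \<tau> (Suc (Suc n)))"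
      unfolding play by (simp add: maker_won_iff maker_vertices_Cons_Cons)
    then show ?thesis ..
  qed
qed

lemma maker_can_win_from_move:
  assumes x: "x \<in> V - M0 - B0"
    and last: "V - M0 - B0 - {x} = {} \<Longrightarrow> contains_edge E (insert x M0)"
    and reply: "\<And>y. y \<in> V - M0 - B0 - {x} \<Longrightarrow> maker_can_win_from V E (insert x M0) (insert y B0)"
  shows "maker_can_win_from V E M0 B0"
proof -
  obtain d where d: "legal_strategy V M0 B0 d" using legal_strategy_exists by blast
  have "\<exists>\<sigma>. legal_strategy V (insert x M0) (insert y B0) \<sigma> \<and>
      (y \<in> V - M0 - B0 - {x} \<longrightarrow> winning_strategy V E (insert x M0) (insert y B0) \<sigma>)" for y
    using reply[of y] legal_strategy_exists
    unfolding maker_can_win_from_iff_winning_strategy winning_strategy_def by blast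
  then obtain S where "\<And>y. legal_strategy V (insert x M0) (insert y B0) (S y)"
    and "\<And>y. y \<in> V - M0 - B0 - {x} \<Longrightarrow> winning_strategy V E (insert x M0) (insert y B0) (S y)"
    by metis
  with x d last have "winning_strategy V E M0 B0 (open_with x S d)"
    by (rule winning_strategy_open_with)
  then show ?thesis unfolding maker_can_win_from_iff_winning_strategy by blast
qed

section \<open>A spoiling strategy for breaker\<close>

definition breaker_escapes :: "'a set set \<Rightarrow> 'a set \<Rightarrow> 'a set \<Rightarrow> bool" where
  "breaker_escapes E M F \<longleftrightarrow>
     \<not> contains_edge E M \<and> (F = {} \<or> (\<exists>y\<in>F. \<not> forced_win E M (F - {y})))"

lemma breaker_escapes_after_move:
  assumes "\<not> forced_win E M F" and "x \<in> F"
  shows "breaker_escapes E (insert x M) (F - {x})"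
proof -
  have "\<not> contains_edge E (insert x M)" using forced_win_winning_move[OF assms(2)] assms(1) by blast
  moreover have "F - {x} = {} \<or> (\<exists>y\<in>F - {x}. \<not> forced_win E (insert x M) (F - {x} - {y}))"
  proof (rule ccontr)
    assume contra: "\<not> ?thesis"
    have "forced_win E M F"
    proof (rule forced_win.move[OF assms(2)])
      show "contains_edge E (insert x M)" if "F - {x} = {}" using that contra by blast
      show "forced_win E (insert x M) (F - {x, y})" if "y \<in> F - {x}" for y
      proof -
        have eq: "F - {x} - {y} = F - {x, y}" by blast
        from contra that show ?thesis unfolding eq[symmetric] by blast
      qed
    qed
    with assms(1) show False ..
  qed
  ultimately show ?thesis unfolding breaker_escapes_def by blast
qed

definition spoiler_strategy :: "'a set \<Rightarrow> 'a set set \<Rightarrow> 'a set \<Rightarrow> 'a set \<Rightarrow> 'a list \<Rightarrow> 'a" where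
  "spoiler_strategy V E M0 B0 h =
     (let M = maker_vertices M0 h; F = free_vertices V M0 B0 h in
      if \<exists>y\<in>F. \<not> forced_win E M (F - {y}) then SOME y. y \<in> F \<and> \<not> forced_win E M (F - {y})
      else SOME y. y \<in> F)"

lemma spoiler_strategy_escapes:
  assumes "breaker_escapes E (maker_vertices M0 h) (free_vertices V M0 B0 h)"
    and "free_vertices V M0 B0 h \<noteq> {}"
  shows "\<not> forced_win E (maker_vertices M0 h)
      (free_vertices V M0 B0 h - {spoiler_strategy V E M0 B0 h})"
proof -
  let ?M = "maker_vertices M0 h" and ?F = "free_vertices V M0 B0 h"
  from assms have ex: "\<exists>y. y \<in> ?F \<and> \<not> forced_win E ?M (?F - {y})"
    unfolding breaker_escapes_def by blast
  then have "spoiler_strategy V E M0 B0 h = (SOME y. y \<in> ?F \<and> \<not> forced_win E ?M (?F - {y}))"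
    unfolding spoiler_strategy_def Let_def by (simp add: Bex_def)
  with someI_ex[OF ex] show ?thesis by simp
qed

lemma legal_spoiler_strategy: "legal_strategy V M0 B0 (spoiler_strategy V E M0 B0)"
  unfolding legal_strategy_def
proof (intro allI impI)
  fix h
  let ?M = "maker_vertices M0 h" and ?F = "free_vertices V M0 B0 h"
  assume "?F \<noteq> {}"
  then show "spoiler_strategy V E M0 B0 h \<in> ?F"
  proof (cases "\<exists>y. y \<in> ?F \<and> \<not> forced_win E ?M (?F - {y})")
    case True
    then have "spoiler_strategy V E M0 B0 h = (SOME y. y \<in> ?F \<and> \<not> forced_win E ?M (?F - {y}))"
      unfolding spoiler_strategy_def Let_def by (simp add: Bex_def)
    with someI_ex[OF True] show ?thesis by simp
  next
    case False
    then have "spoiler_strategy V E M0 B0 h = (SOME y. y \<in> ?F)"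
      unfolding spoiler_strategy_def Let_def by (simp add: Bex_def)
    with \<open>?F \<noteq> {}\<close> show ?thesis by (simp add: some_in_eq)
  qed
qed

definition breaker_safe :: "'a set \<Rightarrow> 'a set set \<Rightarrow> 'a set \<Rightarrow> 'a set \<Rightarrow> 'a list \<Rightarrow> bool" where
  "breaker_safe V E M0 B0 h \<longleftrightarrow>
     (if even (length h) then \<not> forced_win E (maker_vertices M0 h) (free_vertices V M0 B0 h)
      else breaker_escapes E (maker_vertices M0 h) (free_vertices V M0 B0 h))"

lemma breaker_safe_not_maker_won: "breaker_safe V E M0 B0 h \<Longrightarrow> \<not> maker_won E M0 h"
  unfolding breaker_safe_def breaker_escapes_def maker_won_iff
  by (auto intro: forced_win.won split: if_splits)

lemma breaker_safe_snoc:
  assumes "breaker_safe V E M0 B0 h" and "legal_strategy V M0 B0 \<sigma>"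
    and "free_vertices V M0 B0 h \<noteq> {}"
  shows "breaker_safe V E M0 B0 (h @ [if even (length h) then \<sigma> h else spoiler_strategy V E M0 B0 h])"
proof (cases "even (length h)")
  case True
  from assms(2,3) have "\<sigma> h \<in> free_vertices V M0 B0 h" unfolding legal_strategy_def by blast
  with True assms(1) show ?thesis
    unfolding breaker_safe_def
    by (simp add: maker_vertices_snoc free_vertices_snoc breaker_escapes_after_move)
next
  case False
  with assms(1,3) show ?thesis
    unfolding breaker_safe_def
    by (simp add: maker_vertices_snoc free_vertices_snoc spoiler_strategy_escapes)
qed

lemma breaker_safe_play:
  assumes "\<not> forced_win E M0 (V - M0 - B0)" and "legal_strategy V M0 B0 \<sigma>"
  shows "breaker_safe V E M0 B0 (play V E M0 B0 \<sigma> (spoiler_strategy V E M0 B0) n)"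
proof (induction n)
  case 0
  from assms(1) show ?case by (simp add: breaker_safe_def maker_vertices_def free_vertices_def)
next
  case (Suc n)
  then show ?case using breaker_safe_snoc[OF _ assms(2)] by (simp add: Let_def)
qed

theorem maker_can_win_from_iff_forced_win:
  "maker_can_win_from V E M0 B0 \<longleftrightarrow> forced_win E M0 (V - M0 - B0)"
proof
  assume "maker_can_win_from V E M0 B0"
  then show "forced_win E M0 (V - M0 - B0)"
    using legal_spoiler_strategy breaker_safe_play breaker_safe_not_maker_won
    unfolding maker_can_win_from_def by blast
next
  have "maker_can_win_from V E M B" if "forced_win E M F" "F = V - M - B" for M F B
    using that
  proof (induction arbitrary: B rule: forced_win.induct)
    case (won M F)
    show ?case using won.hyps by (rule maker_can_win_from_contains_edge)
  next
    case (move x F M)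
    show ?case
    proof (rule maker_can_win_from_move)
      show "x \<in> V - M - B" "V - M - B - {x} = {} \<Longrightarrow> contains_edge E (insert x M)"
        using move.hyps(1,2) move.prems by auto
      show "maker_can_win_from V E (insert x M) (insert y B)" if "y \<in> V - M - B - {x}" for y
        using that move.prems by (intro move.IH[of y]) auto
    qed
  qed
  then show "forced_win E M0 (V - M0 - B0) \<Longrightarrow> maker_can_win_from V E M0 B0" by blast
qed

theorem theorem5:
  fixes V V1 V2 :: "'a set" and E E1 E2 :: "'a set set" and v :: 'a
  assumes "\<forall>e\<in>E. e \<subseteq> V"
    and "\<forall>e\<in>E1. e \<subseteq> V1"
    and "\<forall>e\<in>E2. e \<subseteq> V2"
    and "V1 \<union> V2 = V"
    and "V1 \<inter> V2 = {v}"
    and "E = E1 \<union> E2"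
  shows "maker_can_win V E \<longleftrightarrow>
           (maker_can_win V1 E1 \<or> maker_can_win V2 E2 \<or>
            (maker_can_win_from V1 E1 {v} {} \<and> maker_can_win_from V2 E2 {v} {}))"
  using forced_win_glued_iff[OF assms(2,3,5)] assms(4,6)
  by (simp add: maker_can_win_def maker_can_win_from_iff_forced_win)

end
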